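(* There is an absolute constant $C>0$ such that for every $r\ge1$ and all $j,l\in\{0,\ldots,r-1\}$, the local coherences satisfy $$\mu(j,l)\le C\,2^{-j}\,2^{-|j-l|/2}.$$
   Context: Let $n=2^r$, $\mathcal{F}x(\omega)=\frac{1}{\sqrt n}\sum_{t=0}^{n-1}x(t)e^{2\pi i\omega t/n}$ for $x\in\mathbb{C}^n$. Haar vectors: $\psi(t)=2^{-r/2}$ ($0\le t<2^r$); for $l=0,\ldots,r-1$, $p=0,\ldots,2^l-1$: $\phi_{l,p}(t)=2^{(l-r)/2}$ if $p2^{r-l}\le t<(p+\tfrac12)2^{r-l}$, $-2^{(l-r)/2}$ if $(p+\tfrac12)2^{r-l}\le t<(p+1)2^{r-l}$, $0$ otherwise. Frequency bands: $W_0=\{0,1\}$, $W_j=\{-2^j+1,\ldots,-2^{j-1}\}\cup\{2^{j-1}+1,\ldots,2^j\}$ for $j=1,\ldots,r-1$. For $j,l\in\{0,\ldots,r-1\}$, $U_{jl}$ is the matrix with rows indexed by $\omega\in W_j$ and: for $l\ge1$, columns indexed by $p=0,\ldots,2^l-1$ with entries $(U_{jl})_{\omega,p}=\mathcal{F}\phi_{l,p}(\omega)$; for $l=0$, two columns with entries $(U_{j0})_{\omega,0}=\mathcal{F}\psi(\omega)$, $(U_{j0})_{\omega,1}=\mathcal{F}\phi_{0,0}(\omega)$. (These are the blocks of $U=F\Phi$, where $F$ is the DFT matrix with rows indexed by $\omega\in\{-n/2+1,\ldots,n/2\}$ and $\Phi$ has the Haar vectors as columns in the order $\psi,\phi_{0,0},\phi_{1,0},\phi_{1,1},\ldots$.)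 For a matrix $V$, its coherence is $\mu(V)=\max_{a,b}|V_{a,b}|^2$. The $(j,l)$-th local coherence is $\mu(j,l)=\sqrt{\mu(U_{jl})}\,\max_{l'=0,\ldots,r-1}\sqrt{\mu(U_{jl'})}$. *)

theory Defs
  imports "HOL-Analysis.Analysis"
begin

definition dft :: "nat \<Rightarrow> (nat \<Rightarrow> complex) \<Rightarrow> int \<Rightarrow> complex" where
  "dft r x \<omega> = (1 / complex_of_real (sqrt (real (2^r)))) *
     (\<Sum>t<2^r. x t * exp (2 * complex_of_real pi * \<i> * of_int \<omega> * of_nat t / of_nat (2^r)))"

definition haar_psi :: "nat \<Rightarrow> nat \<Rightarrow> complex" where
  "haar_psi r t = (if t < 2^r then complex_of_real (2 powr (- real r / 2)) else 0)"

text \<open>phi_{l,p}(t); the half-integer thresholds (p+1/2)2^(r-l) are handled by doubling t.\<close>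
definition haar_phi :: "nat \<Rightarrow> nat \<Rightarrow> nat \<Rightarrow> nat \<Rightarrow> complex" where
  "haar_phi r l p t =
     (if p * 2^(r-l) \<le> t \<and> 2 * t < (2*p+1) * 2^(r-l)
        then complex_of_real (2 powr ((real l - real r) / 2))
      else if (2*p+1) * 2^(r-l) \<le> 2 * t \<and> t < (p+1) * 2^(r-l)
        then - complex_of_real (2 powr ((real l - real r) / 2))
      else 0)"

definition band :: "nat \<Rightarrow> int set" where
  "band j = (if j = 0 then {0, 1}
             else {-(2^j) + 1 .. -(2^(j-1))} \<union> {2^(j-1) + 1 .. 2^j})"

definition cols :: "nat \<Rightarrow> nat set" where
  "cols l = (if l = 0 then {0, 1} else {0..<2^l})"

definition Ublock :: "nat \<Rightarrow> nat \<Rightarrow> nat \<Rightarrow> int \<Rightarrow> nat \<Rightarrow> complex" where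
  "Ublock r j l \<omega> p =
     (if l = 0 then (if p = 0 then dft r (haar_psi r) \<omega> else dft r (haar_phi r 0 0) \<omega>)
      else dft r (haar_phi r l p) \<omega>)"

definition block_coherence :: "nat \<Rightarrow> nat \<Rightarrow> nat \<Rightarrow> real" where
  "block_coherence r j l =
     Max {(cmod (Ublock r j l \<omega> p))^2 | \<omega> p. \<omega> \<in> band j \<and> p \<in> cols l}"

definition local_coherence :: "nat \<Rightarrow> nat \<Rightarrow> nat \<Rightarrow> real" where
  "local_coherence r j l =
     sqrt (block_coherence r j l) * (MAX l' \<in> {0..<r}. sqrt (block_coherence r j l'))"

end

theory Submission
  imports Defs
begin

text \<open>
  Write \<open>n = 2^r\<close> and \<open>z = e^{2\<pi>i\<omega>/n}\<close>. The transform of the constant vector \<open>\<psi>\<close> is the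
  indicator of \<open>n | \<omega>\<close>. The vector \<open>\<phi>\<^sub>l\<^sub>,\<^sub>p\<close> is the difference of two adjacent boxes of
  length \<open>h = 2^{r-l-1}\<close>, so its transform is a geometric sum times \<open>1 - z^h\<close>, and
  multiplying by \<open>1 - z\<close> gives \<open>|F\<phi>\<^sub>l\<^sub>,\<^sub>p(\<omega>)| |1 - z| = 2^{l/2}/n |1 - z^h|^2\<close>.
  Bounding \<open>|1 - z| \<ge> \<pi>|\<omega>|/n\<close> from below and \<open>|1 - z^h|\<close> from above either by \<open>2\<close> or by
  \<open>\<pi>|\<omega>|/2^l\<close> yields \<open>|F\<phi>\<^sub>l\<^sub>,\<^sub>p(\<omega>)|^2 \<le> min (2\<cdot>2^l/\<omega>^2) (\<pi>^2\<omega>^2/8^l)\<close>. On the band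
  \<open>W\<^sub>j\<close> we have \<open>2^{j-1} \<le> |\<omega>| \<le> 2^j\<close>, whence \<open>\<mu>(U\<^sub>j\<^sub>l) \<le> 10\<cdot>2^{-j-|j-l|}\<close>; taking square
  roots gives the claim with \<open>C = 10\<close>.
\<close>

lemma sin_ge_half:
  fixes x :: real assumes "0 \<le> x" "x \<le> pi/2"
  shows "x/2 \<le> sin x"
proof -
  have "\<bar>sin x - (\<Sum>m<3. sin_coeff m * x ^ m)\<bar> \<le> inverse (fact 3) * \<bar>x\<bar> ^ 3"
    by (rule Maclaurin_sin_bound)
  moreover have "(\<Sum>m<3. sin_coeff m * x ^ m) = x"
    by (simp add: numeral_3_eq_3 sin_coeff_def)
  moreover have "inverse (fact 3) * \<bar>x\<bar> ^ 3 = x^3 / 6"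
    using assms by (simp add: fact_numeral field_simps)
  ultimately have taylor: "x - x^3 / 6 \<le> sin x"
    by linarith
  have "x \<le> 8/5" using assms pi_approx(2) by simp
  then have "x^2 \<le> (8/5)^2" using assms by (intro power_mono) auto
  then have "x^2 \<le> 3" by (simp add: power_divide)
  then have "x * x^2 \<le> x * 3" using assms by (intro mult_left_mono) auto
  then have "x^3 \<le> 3 * x" by (simp add: power2_eq_square power3_eq_cube mult.commute)
  then show ?thesis using taylor by linarith
qed

lemma pi_sq_ge_8: "8 \<le> pi^2"
proof -
  have "3 * 3 \<le> pi * pi" using pi_gt3 by (intro mult_mono) auto
  then show ?thesis by (simp add: power2_eq_square)
qed

lemma pi_sq_le_10: "pi^2 \<le> 10"
proof -
  have "pi * pi \<le> 3.15 * 3.15" using pi_approx by (intro mult_mono) auto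
  then show ?thesis by (simp add: power2_eq_square)
qed

lemma two_powr_diff_nat: "(2::real) powr (real a - real b) = 2^a / 2^b"
  by (simp add: powr_diff powr_realpow)

lemma sqrt_two_powr: "sqrt (2 powr x) = 2 powr (x / 2)"
  by (simp add: powr_half_sqrt_powr)

lemma norm_one_minus_exp_ii_eq: "cmod (1 - exp (\<i> * of_real t)) = 2 * \<bar>sin (t/2)\<bar>"
  by (metis dist_exp_i_1 norm_minus_commute)

lemma norm_one_minus_exp_ii_le: "cmod (1 - exp (\<i> * of_real t)) \<le> \<bar>t\<bar>"
  using abs_sin_x_le_abs_x[of "t/2"] by (simp add: norm_one_minus_exp_ii_eq)

lemma norm_one_minus_exp_ii_le_2: "cmod (1 - exp (\<i> * of_real t)) \<le> 2"
  by (simp add: norm_one_minus_exp_ii_eq)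

lemma norm_one_minus_exp_ii_ge:
  assumes "\<bar>t\<bar> \<le> pi"
  shows "\<bar>t\<bar>/2 \<le> cmod (1 - exp (\<i> * of_real t))"
proof -
  have "\<bar>sin (t/2)\<bar> = sin (\<bar>t\<bar>/2)"
    using assms sin_ge_zero[of "\<bar>t\<bar>/2"] by (cases "t \<ge> 0") (auto simp: abs_if)
  then show ?thesis
    using sin_ge_half[of "\<bar>t\<bar>/2"] assms by (simp add: norm_one_minus_exp_ii_eq)
qed

lemma dft_kernel_eq_power:
  "exp (2 * complex_of_real pi * \<i> * of_int w * of_nat t / of_nat (2^r))
     = exp (\<i> * of_real (2 * pi * w / 2^r)) ^ t"
proof -
  have e: "of_nat t * (\<i> * of_real (2 * pi * w / 2^r)) =
     2 * complex_of_real pi * \<i> * of_int w * of_nat t / of_nat (2^r)"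
    by (simp add: field_simps)
  show ?thesis unfolding exp_of_nat_mult[symmetric] e ..
qed

lemma exp_ii_eq_1_iff_dvd:
  "exp (\<i> * of_real (2 * pi * w / 2^r)) = 1 \<longleftrightarrow> (2::int)^r dvd w"
proof -
  have "exp (\<i> * of_real (2 * pi * w / 2^r)) = 1 \<longleftrightarrow> (\<exists>n::int. w / 2^r = n)"
  proof -
    have "2 * pi * w / 2^r = of_int (2 * n) * pi \<longleftrightarrow> w / 2^r = n" for n :: int
      by (auto simp: field_simps)
    then show ?thesis by (simp add: exp_eq_1)
  qed
  also have "\<dots> \<longleftrightarrow> (2::int)^r dvd w"
    by (auto simp: dvd_def field_simps)
      (metis of_int_eq_iff of_int_mult of_int_numeral of_int_power mult.commute)+
  finally show ?thesis .
qed

lemma dft_haar_psi: "dft r (haar_psi r) w = (if (2::int)^r dvd w then 1 else 0)"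
proof -
  define z where "z = exp (\<i> * of_real (2 * pi * w / 2^r))"
  have "2 powr (- real r / 2) / sqrt (2^r) = (2::real) powr (- real r)"
    using sqrt_two_powr[of "real r"] by (simp add: powr_realpow divide_powr_uminus flip: powr_add)
  also have "\<dots> = 1 / 2^r"
    by (simp add: powr_minus powr_realpow divide_inverse)
  finally have "complex_of_real (2 powr (- real r / 2) / sqrt (2^r)) = of_real (1 / 2^r)"
    by (rule arg_cong)
  then have scale:
      "complex_of_real (2 powr (- real r / 2)) / complex_of_real (sqrt (real (2^r))) = 1 / 2^r"
    by simp
  have "dft r (haar_psi r) w = complex_of_real (2 powr (- real r / 2))
      / complex_of_real (sqrt (real (2^r))) * (\<Sum>t<2^r. z^t)"
    unfolding dft_def dft_kernel_eq_power z_def[symmetric]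
    by (simp add: haar_psi_def sum_distrib_left)
  also have "\<dots> = 1 / 2^r * (\<Sum>t<2^r. z^t)"
    by (simp only: scale)
  finally have dft: "dft r (haar_psi r) w = 1 / 2^r * (\<Sum>t<2^r. z^t)" .
  have "z^(2^r) = 1"
    unfolding z_def exp_of_nat_mult[symmetric] by (simp add: mult.commute mult.left_commute)
  then show ?thesis
    using exp_ii_eq_1_iff_dvd[of w r, folded z_def] by (simp add: dft sum_gp_strict)
qed

lemma sum_lessThan_two_blocks:
  fixes g :: "nat \<Rightarrow> 'a::comm_monoid_add"
  assumes "a + 2*h \<le> N" "\<And>t. t < N \<Longrightarrow> \<not> (a \<le> t \<and> t < a + 2*h) \<Longrightarrow> g t = 0"
  shows "(\<Sum>t<N. g t) = (\<Sum>t<h. g (a+t)) + (\<Sum>t<h. g (a+h+t))"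
proof -
  have "(\<Sum>t<N. g t) = (\<Sum>t\<in>{a..<a+h}. g t) + (\<Sum>t\<in>{a+h..<a+h+h}. g t)"
    using assms by (subst sum.atLeastLessThan_concat)
      (auto intro: sum.mono_neutral_right simp: mult_2 add.assoc)
  also have "\<dots> = (\<Sum>t<h. g (a+t)) + (\<Sum>t<h. g (a+h+t))"
    by (simp add: sum.shift_bounds_nat_ivl[of g 0 _ h, simplified, symmetric]
        add.commute lessThan_atLeast0)
  finally show ?thesis .
qed

lemma dft_haar_phi:
  fixes w :: int
  assumes "l < r" "p < 2^l"
  defines "z \<equiv> exp (\<i> * of_real (2 * pi * w / 2^r))" and "h \<equiv> 2^(r-l-1)"
  shows "dft r (haar_phi r l p) w = of_real (2 powr ((real l - real r)/2) / sqrt (2^r))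
           * z^(p*(2*h)) * (1 - z^h) * (\<Sum>t<h. z^t)"
proof -
  define c where "c = complex_of_real (2 powr ((real l - real r)/2))"
  define a where "a = p*(2*h)"
  have two_h: "(2::nat)^(r-l) = 2*h"
    unfolding h_def using assms(1) by (metis Suc_diff_Suc diff_Suc_1 power_Suc zero_less_diff)
  have phi: "haar_phi r l p t =
      (if a \<le> t \<and> t < a+h then c else if a+h \<le> t \<and> t < a+2*h then -c else 0)" for t
    unfolding haar_phi_def c_def two_h a_def by (auto simp: algebra_simps)
  have "(p+1)*2^(r-l) \<le> 2^l * 2^(r-l)" using assms(2) by (intro mult_right_mono) auto
  also have "\<dots> = (2::nat)^r" using assms(1) by (simp flip: power_add)
  finally have support: "a + 2*h \<le> 2^r" unfolding a_def two_h by (simp add: algebra_simps)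
  have "(\<Sum>t<2^r. haar_phi r l p t * z^t)
      = (\<Sum>t<h. haar_phi r l p (a+t) * z^(a+t))
        + (\<Sum>t<h. haar_phi r l p (a+h+t) * z^(a+h+t))"
    by (rule sum_lessThan_two_blocks[OF support]) (auto simp: phi)
  also have "\<dots> = c * z^a * (1 - z^h) * (\<Sum>t<h. z^t)"
    by (simp add: phi power_add sum_distrib_left sum_negf algebra_simps)
  finally have "(\<Sum>t<2^r. haar_phi r l p t * z^t) = c * z^a * (1 - z^h) * (\<Sum>t<h. z^t)" .
  then show ?thesis
    unfolding dft_def dft_kernel_eq_power z_def[symmetric] c_def a_def by (simp add: field_simps)
qed

lemma norm_dft_haar_phi_mult_chord:
  fixes w :: int
  assumes "l < r" "p < 2^l"
  shows "(cmod (dft r (haar_phi r l p) w))^2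
           * (cmod (1 - exp (\<i> * of_real (2 * pi * w / 2^r))))^2
         = 2^l / 4^r * (cmod (1 - exp (\<i> * of_real (pi * w / 2^l))))^4"
proof -
  define z where "z = exp (\<i> * of_real (2 * pi * w / 2^r))"
  define h :: nat where "h = 2^(r-l-1)"
  define k where "k = 2 powr ((real l - real r)/2) / sqrt (2^r)"
  have "r = Suc (l + (r-l-1))" using assms(1) by simp
  then have "(2::real)^r = 2 * 2^l * h"
    unfolding h_def by (metis of_nat_numeral of_nat_power power_Suc power_add mult.assoc)
  moreover have "h > 0" by (simp add: h_def)
  ultimately have "2 * pi * w / 2^r * h = pi * w / 2^l"
    by (simp add: field_simps)
  then have "of_nat h * (\<i> * of_real (2 * pi * w / 2^r)) = \<i> * of_real (pi * w / 2^l)"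
    by (metis of_real_mult of_real_of_nat_eq mult.commute mult.left_commute)
  then have zh: "z^h = exp (\<i> * of_real (pi * w / 2^l))"
    unfolding z_def exp_of_nat_mult[symmetric] by simp
  have "k^2 = (2 powr ((real l - real r)/2))^2 / (sqrt (2^r))^2"
    by (simp add: k_def power_divide)
  also have "\<dots> = 2 powr (real l - real r) / 2^r"
    by (simp add: powr_half_sqrt_powr)
  also have "\<dots> = 2^l / 4^r"
    by (simp add: powr_diff powr_realpow power_mult_distrib flip: power_mult_distrib)
  finally have k2: "k^2 = 2^l / 4^r" .
  have "dft r (haar_phi r l p) w * (1 - z)
      = of_real k * z^(p*(2*h)) * (1 - z^h) * ((1 - z) * (\<Sum>t<h. z^t))"
    unfolding dft_haar_phi[OF assms] z_def[symmetric] h_def[symmetric] k_def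
    by (simp only: mult_ac)
  also have "\<dots> = of_real k * z^(p*(2*h)) * (1 - z^h)^2"
    by (simp add: one_diff_power_eq[symmetric] power2_eq_square)
  finally have "cmod (dft r (haar_phi r l p) w * (1 - z)) = \<bar>k\<bar> * (cmod (1 - z^h))^2"
    by (simp add: norm_mult norm_power z_def)
  then have "(cmod (dft r (haar_phi r l p) w) * cmod (1 - z))^2
      = (\<bar>k\<bar> * (cmod (1 - z^h))^2)^2"
    by (simp only: norm_mult)
  then have "(cmod (dft r (haar_phi r l p) w))^2 * (cmod (1 - z))^2
      = k^2 * (cmod (1 - z^h))^4"
    by (simp add: power_mult_distrib flip: power_mult)
  then show ?thesis by (simp only: k2 zh z_def[symmetric])
qed

lemma norm_dft_haar_phi_sq_le:
  fixes w :: int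
  assumes "l < r" "p < 2^l" "w \<noteq> 0" "\<bar>w\<bar> \<le> 2^(r-1)"
  shows "(cmod (dft r (haar_phi r l p) w))^2
           \<le> 2^l * (cmod (1 - exp (\<i> * of_real (pi * w / 2^l))))^4 / (pi^2 * w^2)"
proof -
  define D where "D = (cmod (dft r (haar_phi r l p) w))^2"
  define X where "X = cmod (1 - exp (\<i> * of_real (pi * w / 2^l)))"
  define Y where "Y = cmod (1 - exp (\<i> * of_real (2 * pi * w / 2^r)))"
  have chord: "D * Y^2 = 2^l / 4^r * X^4"
    unfolding D_def X_def Y_def by (rule norm_dft_haar_phi_mult_chord[OF assms(1,2)])
  have r: "(2::real)^r = 2 * 2^(r-1)"
    using assms(1) by (metis Suc_diff_1 gr0I not_less0 power_Suc)
  have "\<bar>real_of_int w\<bar> \<le> 2^(r-1)"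
    using assms(4) by (metis of_int_abs of_int_le_iff of_int_numeral of_int_power)
  then have "\<bar>2 * pi * w / 2^r\<bar> \<le> pi"
    by (simp add: r abs_mult field_simps)
  then have "\<bar>2 * pi * w / 2^r\<bar> / 2 \<le> Y"
    unfolding Y_def by (rule norm_one_minus_exp_ii_ge)
  then have "(pi * \<bar>w\<bar> / 2^r)^2 \<le> Y^2"
    by (intro power_mono) (auto simp: abs_mult)
  then have "D * (pi * \<bar>w\<bar> / 2^r)^2 \<le> D * Y^2"
    by (intro mult_left_mono) (auto simp: D_def)
  moreover have "(4::real)^r = (2^r)^2"
    by (simp add: power2_eq_square flip: power_mult_distrib)
  ultimately have "D * (pi^2 * w^2) / 4^r \<le> 2^l * X^4 / 4^r"
    by (simp add: chord power_mult_distrib power_divide)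
  then have "D * (pi^2 * w^2) \<le> 2^l * X^4"
    by (simp add: divide_le_cancel)
  moreover have "pi^2 * w^2 > 0"
    using assms(3) by simp
  ultimately show ?thesis
    unfolding D_def[symmetric] X_def[symmetric] by (simp add: field_simps)
qed

text \<open>The first bound is the one that matters for scales \<open>l \<le> j\<close>, the second for \<open>l > j\<close>.\<close>

lemma norm_dft_haar_phi_sq_bounds:
  fixes w :: int
  assumes "l < r" "p < 2^l" "w \<noteq> 0" "\<bar>w\<bar> \<le> 2^(r-1)"
  shows "(cmod (dft r (haar_phi r l p) w))^2 \<le> 2 * 2^l / w^2"
    and "(cmod (dft r (haar_phi r l p) w))^2 \<le> pi^2 * w^2 / 8^l"
proof -
  define X where "X = cmod (1 - exp (\<i> * of_real (pi * w / 2^l)))"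
  note main = norm_dft_haar_phi_sq_le[OF assms, folded X_def]
  have w2: "(real_of_int w)^2 > 0"
    using assms(3) by simp
  have "X^4 \<le> 2^4"
    unfolding X_def by (intro power_mono norm_one_minus_exp_ii_le_2) auto
  then have "2^l * X^4 / (pi^2 * w^2) \<le> 2^l * 16 / (8 * w^2)"
    using w2 pi_sq_ge_8 by (intro frac_le mult_left_mono mult_right_mono) auto
  with main show "(cmod (dft r (haar_phi r l p) w))^2 \<le> 2 * 2^l / w^2"
    by simp
  have "X \<le> pi * \<bar>w\<bar> / 2^l"
    unfolding X_def using norm_one_minus_exp_ii_le[of "pi * w / 2^l"] by (simp add: abs_mult)
  then have "X^4 \<le> (pi * \<bar>w\<bar> / 2^l)^4"
    by (intro power_mono) (auto simp: X_def)
  then have "2^l * X^4 / (pi^2 * w^2) \<le> 2^l * (pi * \<bar>w\<bar> / 2^l)^4 / (pi^2 * w^2)"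
    using w2 by (intro divide_right_mono mult_left_mono) auto
  also have "\<dots> = pi^2 * w^2 * (2^l / (2^l)^4)"
    using w2 by (simp add: power_divide power_mult_distrib power_even_abs_numeral field_simps)
  also have "((2::real)^l)^4 = (2^4)^l"
    by (simp only: power_mult[symmetric] mult.commute)
  also have "\<dots> = 2^l * 8^l"
    by (simp flip: power_mult_distrib)
  finally have "2^l * X^4 / (pi^2 * w^2) \<le> pi^2 * w^2 / 8^l"
    by simp
  with main show "(cmod (dft r (haar_phi r l p) w))^2 \<le> pi^2 * w^2 / 8^l"
    by linarith
qed

lemma band_abs_bounds:
  assumes "w \<in> band j"
  shows "\<bar>w\<bar> \<le> 2^j" and "w \<noteq> 0 \<Longrightarrow> 2^j \<le> 2 * \<bar>w\<bar>" and "w = 0 \<Longrightarrow> j = 0"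
proof -
  have "\<bar>w\<bar> \<le> 2^j \<and> (w \<noteq> 0 \<longrightarrow> 2^j \<le> 2 * \<bar>w\<bar>) \<and> (w = 0 \<longrightarrow> j = 0)"
  proof (cases j)
    case 0
    then show ?thesis using assms by (auto simp: band_def)
  next
    case (Suc i)
    then have "w \<in> {-(2 * 2^i) + 1 .. -(2^i)} \<union> {2^i + 1 .. 2 * 2^i}"
      using assms by (simp add: band_def)
    then show ?thesis
      using Suc by (auto simp: abs_if)
  qed
  then show "\<bar>w\<bar> \<le> 2^j" and "w \<noteq> 0 \<Longrightarrow> 2^j \<le> 2 * \<bar>w\<bar>" and "w = 0 \<Longrightarrow> j = 0"
    by auto
qed

lemma band_nonempty: "band j \<noteq> {}"
proof (cases j)
  case (Suc i)
  then have "2^j \<in> band j"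
    using one_le_power[of "2::int" i] by (simp add: band_def)
  then show ?thesis by auto
qed (simp add: band_def)

lemma norm_dft_haar_phi_sq_le_band:
  assumes "j < r" "l < r" "p < 2^l" "w \<in> band j"
  shows "(cmod (dft r (haar_phi r l p) w))^2 \<le> 10 * 2 powr (- real j - \<bar>real j - real l\<bar>)"
proof (cases "w = 0")
  case True
  then show ?thesis
    using dft_haar_phi[OF assms(2,3), of w] by simp
next
  case False
  define D where "D = (cmod (dft r (haar_phi r l p) w))^2"
  have "\<bar>w\<bar> \<le> 2^(r-1)"
    using band_abs_bounds(1)[OF assms(4)] power_increasing[of j "r-1" "2::int"] assms(1)
    by linarith
  note bounds = norm_dft_haar_phi_sq_bounds[OF assms(2,3) False this, folded D_def]
  have "real_of_int (2^j) \<le> real_of_int (2 * \<bar>w\<bar>)"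
    using band_abs_bounds(2)[OF assms(4) False] by (simp only: of_int_le_iff)
  then have "(2^j)^2 \<le> (2 * \<bar>real_of_int w\<bar>)^2"
    by (intro power_mono) auto
  moreover have four: "(4::real)^j = (2^j)^2"
    by (simp add: power2_eq_square flip: power_mult_distrib)
  ultimately have w_lower: "4^j \<le> 4 * (real_of_int w)^2"
    by (simp add: power_mult_distrib)
  have "real_of_int \<bar>w\<bar> \<le> real_of_int (2^j)"
    using band_abs_bounds(1)[OF assms(4)] by (simp only: of_int_le_iff)
  then have w_upper: "(real_of_int w)^2 \<le> 4^j"
    using power_mono[of "\<bar>real_of_int w\<bar>" "2^j" 2] by (simp add: four)
  show ?thesis
  proof (cases "l \<le> j")
    case True
    have "D \<le> 2 * 2^l / w^2"
      by (rule bounds(1))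
    also have "\<dots> \<le> 8 * 2^l / 4^j"
      using w_lower False by (simp add: field_simps)
    also have "\<dots> = 8 * 2 powr (real l - 2 * real j)"
      using two_powr_diff_nat[of l "2*j"] by (simp add: power_mult)
    also have "\<dots> \<le> 10 * 2 powr (- real j - \<bar>real j - real l\<bar>)"
      using True by simp
    finally show ?thesis unfolding D_def .
  next
    case False
    have "D \<le> pi^2 * w^2 / 8^l"
      by (rule bounds(2))
    also have "\<dots> \<le> 10 * 4^j / 8^l"
      using w_upper pi_sq_le_10 by (intro divide_right_mono mult_mono) auto
    also have "\<dots> = 10 * 2 powr (2 * real j - 3 * real l)"
      using two_powr_diff_nat[of "2*j" "3*l"] by (simp add: power_mult)
    also have "\<dots> \<le> 10 * 2 powr (- real j - \<bar>real j - real l\<bar>)"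
      using False by simp
    finally show ?thesis unfolding D_def .
  qed
qed

lemma norm_Ublock_sq_le:
  assumes "j < r" "l < r" "w \<in> band j" "p \<in> cols l"
  shows "(cmod (Ublock r j l w p))^2 \<le> 10 * 2 powr (- real j - \<bar>real j - real l\<bar>)"
proof (cases "l = 0 \<and> p = 0")
  case True
  have "\<bar>w\<bar> < 2^r"
    using band_abs_bounds(1)[OF assms(3)] power_strict_increasing[OF assms(1), of "2::int"]
    by linarith
  then have "(2::int)^r dvd w \<longleftrightarrow> w = 0"
    using dvd_imp_le_int[of w "2^r"] by auto
  then show ?thesis
    using True band_abs_bounds(3)[OF assms(3)] by (auto simp: Ublock_def dft_haar_psi)
next
  case False
  define q where "q = (if l = 0 then 0 else p)"
  have "Ublock r j l w p = dft r (haar_phi r l q) w" and "q < 2^l"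
    using False assms(4) by (auto simp: Ublock_def q_def cols_def)
  then show ?thesis
    using norm_dft_haar_phi_sq_le_band[OF assms(1,2) _ assms(3)] by simp
qed

lemma block_coherence_bounds:
  assumes "j < r" "l < r"
  shows "0 \<le> block_coherence r j l"
    and "block_coherence r j l \<le> 10 * 2 powr (- real j - \<bar>real j - real l\<bar>)"
proof -
  define f where "f = (\<lambda>(w, p). (cmod (Ublock r j l w p))^2)"
  have "finite (band j)"
    by (simp add: band_def)
  with band_nonempty have finite: "finite (f ` (band j \<times> cols l))"
    and nonempty: "f ` (band j \<times> cols l) \<noteq> {}"
    by (auto simp: cols_def)
  have coh: "block_coherence r j l = Max (f ` (band j \<times> cols l))"
    unfolding block_coherence_def f_def by (rule arg_cong[where f = Max]) auto
  show "0 \<le> block_coherence r j l"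
    unfolding coh using finite nonempty by (auto simp: Max_ge_iff f_def)
  show "block_coherence r j l \<le> 10 * 2 powr (- real j - \<bar>real j - real l\<bar>)"
    unfolding coh using finite nonempty by (auto simp: f_def intro: norm_Ublock_sq_le[OF assms])
qed

lemma sqrt_block_coherence_le:
  assumes "j < r" "l < r"
  shows "sqrt (block_coherence r j l) \<le> sqrt 10 * 2 powr (- real j / 2 - \<bar>real j - real l\<bar> / 2)"
proof -
  have "sqrt (block_coherence r j l) \<le> sqrt (10 * 2 powr (- real j - \<bar>real j - real l\<bar>))"
    using block_coherence_bounds(2)[OF assms] by simp
  also have "\<dots> = sqrt 10 * 2 powr (- real j / 2 - \<bar>real j - real l\<bar> / 2)"
    by (simp add: real_sqrt_mult sqrt_two_powr diff_divide_distrib)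
  finally show ?thesis .
qed

lemma Max_sqrt_block_coherence_bounds:
  assumes "j < r"
  shows "0 \<le> (MAX l' \<in> {0..<r}. sqrt (block_coherence r j l'))"
    and "(MAX l' \<in> {0..<r}. sqrt (block_coherence r j l')) \<le> sqrt 10 * 2 powr (- real j / 2)"
proof -
  have "0 \<le> sqrt (block_coherence r j j)"
    using block_coherence_bounds(1)[OF assms assms] by simp
  also have "\<dots> \<le> (MAX l' \<in> {0..<r}. sqrt (block_coherence r j l'))"
    using assms by (intro Max_ge) auto
  finally show "0 \<le> (MAX l' \<in> {0..<r}. sqrt (block_coherence r j l'))" .
  show "(MAX l' \<in> {0..<r}. sqrt (block_coherence r j l')) \<le> sqrt 10 * 2 powr (- real j / 2)"
  proof (rule Max.boundedI)
    show "x \<le> sqrt 10 * 2 powr (- real j / 2)"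
      if "x \<in> (\<lambda>l'. sqrt (block_coherence r j l')) ` {0..<r}" for x
      using that sqrt_block_coherence_le[OF assms]
      by (force intro: order_trans[OF _ mult_left_mono[OF powr_mono]])
  qed (use assms in auto)
qed

theorem lemma2:
  shows "\<exists>C::real. C > 0 \<and> (\<forall>r::nat. r \<ge> 1 \<longrightarrow> (\<forall>j<r. \<forall>l<r.
           local_coherence r j l \<le> C * 2 powr (- real j) * 2 powr (- \<bar>real j - real l\<bar> / 2)))"
proof (intro exI[of _ 10] conjI allI impI)
  fix r j l :: nat
  assume "j < r" "l < r"
  note max_bounds = Max_sqrt_block_coherence_bounds[OF \<open>j < r\<close>]
  have "local_coherence r j l \<le> sqrt 10 * 2 powr (- real j / 2 - \<bar>real j - real l\<bar> / 2)
      * (sqrt 10 * 2 powr (- real j / 2))"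
    unfolding local_coherence_def
    by (rule mult_mono[OF sqrt_block_coherence_le[OF \<open>j < r\<close> \<open>l < r\<close>]
          max_bounds(2) _ max_bounds(1)]) simp
  also have "\<dots> = sqrt 10 * sqrt 10
      * 2 powr ((- real j / 2 - \<bar>real j - real l\<bar> / 2) + - real j / 2)"
    by (simp only: powr_add mult_ac)
  also have "(- real j / 2 - \<bar>real j - real l\<bar> / 2) + - real j / 2
      = - real j + - \<bar>real j - real l\<bar> / 2"
    by simp
  also have "sqrt 10 * sqrt 10 * 2 powr (- real j + - \<bar>real j - real l\<bar> / 2)
      = 10 * 2 powr (- real j) * 2 powr (- \<bar>real j - real l\<bar> / 2)"
    by (subst powr_add) simp
  finally show "local_coherence r j l
      \<le> 10 * 2 powr (- real j) * 2 powr (- \<bar>real j - real l\<bar> / 2)" .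
qed simp

end
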